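(* Let $n\ge1$ and let $X,Y\in\widetilde{Sp}(\mathbb{R}^n\times\mathbb{R}^n)$ with $X\neq Y$. Then there exists $f\in A_{fin}[\widetilde{Sp}(\mathbb{A}^1_n)]$ with $\varphi_X(f)\neq\varphi_Y(f)$.
   Context: A pair $(\mathbf z,\mathbf z')\in\mathbb{R}^n\times\mathbb{R}^n$ is degenerate if $z_j=z'_j$ for some $j$. $\widetilde{Sp}(\mathbb{R}^n\times\mathbb{R}^n)$ is the set of finite multisets of points of $\mathbb{R}^n\times\mathbb{R}^n$ modulo the equivalence relation generated by adding or removing degenerate pairs. For $m\ge1$ let $P_m=\mathbb{R}[x_{ij},y_{ij}]_{1\le i\le m,\,1\le j\le n}$ graded by total degree; $S_m$ permutes the block index $i$ simultaneously in $x$ and $y$; $A_m=P_m^{S_m}$; $\pi_m:A_{m+1}\to A_m$ sets $x_{m+1,j}=y_{m+1,j}=0$; $A^\infty_{fin}=\varprojlim_m A_m$ in graded rings (finite sums of compatible families of homogeneous elements of a common degree). For a finite multiset $X=\{(\mathbf{x}_1,\mathbf{y}_1),\dots,(\mathbf{x}_r,\mathbf{y}_r)\}$ and $f\in A^\infty_{fin}$, $\varphi_X(f)=f_m(\mathbf{x}_1,\mathbf{y}_1,\dots,\mathbf{x}_r,\mathbf{y}_r,0,\dots,0)$ for any $m\ge r$. $A_{fin}[\widetilde{Sp}(\mathbb{A}^1_n)]$ is the set of $f\in A^\infty_{fin}$ with $\varphi_{X\cup\{(\mathbf z,\mathbf z')\}}(f)=\varphi_X(f)$ for all finite multisets $X$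 and degenerate pairs $(\mathbf z,\mathbf z')$; for such $f$, $\varphi_X(f)$ is well defined for $X\in\widetilde{Sp}(\mathbb{R}^n\times\mathbb{R}^n)$. *)

theory Defs
  imports "HOL-Analysis.Analysis" "HOL-Library.Multiset" "HOL-Combinatorics.Permutations"
begin

text \<open>Points of R^n x R^n; the dimension n is the cardinality of the finite index type 'n.
  A configuration assigns to each block index i a point (x_i, y_i); an element of P_m is
  represented by the polynomial function it induces on configurations (only blocks i < m,
  i.e. the paper's blocks 1..m, are used).\<close>

type_synonym 'n pt = "(real^'n) \<times> (real^'n)"
type_synonym 'n conf = "nat \<Rightarrow> 'n pt"

text \<open>F is (the function of) a homogeneous polynomial of total degree d in the variables
  x_{ij} = fst (z i) $ j, y_{ij} = snd (z i) $ j, i < m.\<close>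
definition hom_poly :: "nat \<Rightarrow> nat \<Rightarrow> ('n::finite conf \<Rightarrow> real) \<Rightarrow> bool" where
  "hom_poly m d F \<longleftrightarrow>
     (\<exists>(M :: ((nat \<Rightarrow> 'n \<Rightarrow> nat) \<times> (nat \<Rightarrow> 'n \<Rightarrow> nat)) set) c.
        finite M \<and>
        (\<forall>(\<alpha>, \<beta>)\<in>M. (\<forall>i j. m \<le> i \<longrightarrow> \<alpha> i j = 0 \<and> \<beta> i j = 0) \<and>
                       (\<Sum>i<m. \<Sum>j\<in>UNIV. \<alpha> i j + \<beta> i j) = d) \<and>
        F = (\<lambda>z. \<Sum>(\<alpha>, \<beta>)\<in>M. c (\<alpha>, \<beta>) *
               (\<Prod>i<m. \<Prod>j\<in>UNIV. (fst (z i) $ j) ^ (\<alpha> i j) * (snd (z i) $ j) ^ (\<beta> i j))))"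

definition sym_m :: "nat \<Rightarrow> ('n::finite conf \<Rightarrow> real) \<Rightarrow> bool" where
  "sym_m m F \<longleftrightarrow> (\<forall>\<sigma> z. \<sigma> permutes {..<m} \<longrightarrow> F (z \<circ> \<sigma>) = F z)"

text \<open>A compatible family (g_m)_{m>=1} of homogeneous elements of A_m of common degree d:
  pi_m (g_{m+1}) = g_m, where pi_m sets the (m+1)-st block (index m) to 0.\<close>
definition hom_family :: "nat \<Rightarrow> (nat \<Rightarrow> 'n::finite conf \<Rightarrow> real) \<Rightarrow> bool" where
  "hom_family d g \<longleftrightarrow>
     (\<forall>m\<ge>1. hom_poly m d (g m) \<and> sym_m m (g m)) \<and>
     (\<forall>m\<ge>1. \<forall>z. g m z = g (Suc m) (z(m := (0, 0))))"

definition A_inf_fin :: "(nat \<Rightarrow> 'n::finite conf \<Rightarrow> real) set" where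
  "A_inf_fin = {f. \<exists>k (ds :: nat \<Rightarrow> nat) gs.
       (\<forall>l<k. hom_family (ds l) (gs l)) \<and>
       (\<forall>m\<ge>1. \<forall>z. f m z = (\<Sum>l<k. gs l m z))}"

definition conf_of_list :: "'n::finite pt list \<Rightarrow> 'n conf" where
  "conf_of_list xs i = (if i < length xs then xs ! i else (0, 0))"

text \<open>phi_X(f) = f_m(x_1,y_1,...,x_r,y_r,0,...,0) with m = max 1 r (any m >= r gives the
  same value for f in A^infty_fin).\<close>
definition phi :: "'n::finite pt multiset \<Rightarrow> (nat \<Rightarrow> 'n conf \<Rightarrow> real) \<Rightarrow> real" where
  "phi X f = f (max 1 (size X)) (conf_of_list (SOME xs. mset xs = X))"

definition degenerate :: "'n::finite pt \<Rightarrow> bool" where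
  "degenerate p \<longleftrightarrow> (\<exists>j. fst p $ j = snd p $ j)"

definition A_fin_Sp :: "(nat \<Rightarrow> 'n::finite conf \<Rightarrow> real) set" where
  "A_fin_Sp = {f \<in> A_inf_fin. \<forall>X p. degenerate p \<longrightarrow> phi (add_mset p X) f = phi X f}"

text \<open>One step: adding a degenerate pair. Sp~ is the quotient by the equivalence relation
  generated by this (equivclp = reflexive-symmetric-transitive closure).\<close>
definition sp_step :: "'n::finite pt multiset \<Rightarrow> 'n pt multiset \<Rightarrow> bool" where
  "sp_step X Y \<longleftrightarrow> (\<exists>p. degenerate p \<and> Y = add_mset p X)"

definition sp_equiv :: "'n::finite pt multiset \<Rightarrow> 'n pt multiset \<Rightarrow> bool" where
  "sp_equiv = equivclp sp_step"

end

theory Submission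
  imports Defs
begin

text \<open>For a polynomial h in the coordinates of one point with h(0) = 0, the functions
  z \<mapsto> \<Sum>i<m. h(z_i) form compatible symmetric families whose value at a multiset X is
  \<Sum>p\<in>#X. h(p). Taking h = D * Q with D(x,y) = \<Prod>j. (x_j - y_j), which vanishes exactly on
  degenerate pairs, makes this value insensitive to degenerate pairs. If X and Y are not
  equivalent, some nondegenerate point a has different multiplicities in X and Y; a
  polynomial Q vanishing at the other points of X and Y but not at a then separates them.
  Q need not be homogeneous, but D * Q is a sum of homogeneous pieces each vanishing at 0.\<close>

definition block_monomial ::
    "nat \<Rightarrow> (nat \<Rightarrow> 'n \<Rightarrow> nat) \<times> (nat \<Rightarrow> 'n \<Rightarrow> nat) \<Rightarrow> 'n::finite conf \<Rightarrow> real" where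
  "block_monomial m w z =
     (\<Prod>i<m. \<Prod>j\<in>UNIV. (fst (z i) $ j) ^ (fst w i j) * (snd (z i) $ j) ^ (snd w i j))"

definition exponent_of_degree ::
    "nat \<Rightarrow> nat \<Rightarrow> (nat \<Rightarrow> 'n::finite \<Rightarrow> nat) \<times> (nat \<Rightarrow> 'n \<Rightarrow> nat) \<Rightarrow> bool" where
  "exponent_of_degree m d w \<longleftrightarrow>
     (\<forall>i j. m \<le> i \<longrightarrow> fst w i j = 0 \<and> snd w i j = 0) \<and>
     (\<Sum>i<m. \<Sum>j\<in>UNIV. fst w i j + snd w i j) = d"

lemma hom_poly_iff:
  "hom_poly m d (F :: 'n::finite conf \<Rightarrow> real) \<longleftrightarrow>
     (\<exists>M c. finite M \<and> (\<forall>w\<in>M. exponent_of_degree m d w) \<and>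
            F = (\<lambda>z. \<Sum>w\<in>M. c w * block_monomial m w z))"
  unfolding hom_poly_def exponent_of_degree_def block_monomial_def
  by (simp add: split_def case_prod_beta)

lemma hom_poly_monomial:
  "exponent_of_degree m d w \<Longrightarrow> hom_poly m d (block_monomial m w :: 'n::finite conf \<Rightarrow> real)"
  unfolding hom_poly_iff by (intro exI[of _ "{w}"] exI[of _ "\<lambda>_. 1"]) auto

lemma hom_poly_zero: "hom_poly m d (\<lambda>z::'n::finite conf. 0)"
  unfolding hom_poly_iff by (intro exI[of _ "{}"]) auto

lemma hom_poly_cmult:
  assumes "hom_poly m d (F :: 'n::finite conf \<Rightarrow> real)"
  shows "hom_poly m d (\<lambda>z. a * F z)"
proof -
  from assms obtain M c where "finite M" "\<forall>w\<in>M. exponent_of_degree m d w"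
    and "F = (\<lambda>z. \<Sum>w\<in>M. c w * block_monomial m w z)"
    unfolding hom_poly_iff by blast
  then show ?thesis
    unfolding hom_poly_iff
    by (intro exI[of _ M] exI[of _ "\<lambda>w. a * c w"]) (auto simp: sum_distrib_left mult.assoc)
qed

lemma hom_poly_add:
  assumes "hom_poly m d (F :: 'n::finite conf \<Rightarrow> real)" "hom_poly m d G"
  shows "hom_poly m d (\<lambda>z. F z + G z)"
proof -
  from assms obtain M1 c1 M2 c2 where
    M1: "finite M1" "\<forall>w\<in>M1. exponent_of_degree m d w" "F = (\<lambda>z. \<Sum>w\<in>M1. c1 w * block_monomial m w z)" and
    M2: "finite M2" "\<forall>w\<in>M2. exponent_of_degree m d w" "G = (\<lambda>z. \<Sum>w\<in>M2. c2 w * block_monomial m w z)"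
    unfolding hom_poly_iff by blast
  define c where "c w = (if w \<in> M1 then c1 w else 0) + (if w \<in> M2 then c2 w else 0)" for w
  have "F z + G z = (\<Sum>w\<in>M1 \<union> M2. c w * block_monomial m w z)" for z
  proof -
    have "(\<Sum>w\<in>M1 \<union> M2. c w * block_monomial m w z) =
        (\<Sum>w\<in>M1 \<union> M2. if w \<in> M1 then c1 w * block_monomial m w z else 0) +
        (\<Sum>w\<in>M1 \<union> M2. if w \<in> M2 then c2 w * block_monomial m w z else 0)"
      unfolding sum.distrib[symmetric] by (rule sum.cong) (auto simp: c_def distrib_right)
    also have "\<dots> = F z + G z"
      using M1 M2 by (simp add: sum.If_cases Int_absorb1 Int_absorb2)
    finally show ?thesis by simp
  qed
  with M1 M2 show ?thesis
    unfolding hom_poly_iff by (intro exI[of _ "M1 \<union> M2"] exI[of _ c]) auto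
qed

lemma hom_poly_sum:
  assumes "finite A" "\<And>a. a \<in> A \<Longrightarrow> hom_poly m d (F a :: 'n::finite conf \<Rightarrow> real)"
  shows "hom_poly m d (\<lambda>z. \<Sum>a\<in>A. F a z)"
  using assms by (induction A rule: finite_induct) (auto intro: hom_poly_add hom_poly_zero)

definition add_exponents ::
    "(nat \<Rightarrow> 'n \<Rightarrow> nat) \<times> (nat \<Rightarrow> 'n \<Rightarrow> nat) \<Rightarrow> (nat \<Rightarrow> 'n \<Rightarrow> nat) \<times> (nat \<Rightarrow> 'n \<Rightarrow> nat) \<Rightarrow>
     (nat \<Rightarrow> 'n \<Rightarrow> nat) \<times> (nat \<Rightarrow> 'n \<Rightarrow> nat)" where
  "add_exponents u v = (\<lambda>i j. fst u i j + fst v i j, \<lambda>i j. snd u i j + snd v i j)"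

lemma block_monomial_add_exponents:
  "block_monomial m (add_exponents u v) z = block_monomial m u z * block_monomial m v z"
  unfolding block_monomial_def add_exponents_def
  by (simp add: power_add prod.distrib[symmetric] mult_ac)

lemma exponent_of_degree_add_exponents:
  "exponent_of_degree m d1 u \<Longrightarrow> exponent_of_degree m d2 v \<Longrightarrow>
   exponent_of_degree m (d1 + d2) (add_exponents (u :: (nat \<Rightarrow> 'n::finite \<Rightarrow> nat) \<times> _) v)"
  unfolding exponent_of_degree_def add_exponents_def by (simp add: sum.distrib)

lemma hom_poly_mult:
  assumes "hom_poly m d1 (F :: 'n::finite conf \<Rightarrow> real)" "hom_poly m d2 G"
  shows "hom_poly m (d1 + d2) (\<lambda>z. F z * G z)"
proof -
  from assms obtain M1 c1 M2 c2 where
    M1: "finite M1" "\<forall>w\<in>M1. exponent_of_degree m d1 w" "F = (\<lambda>z. \<Sum>w\<in>M1. c1 w * block_monomial m w z)" and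
    M2: "finite M2" "\<forall>w\<in>M2. exponent_of_degree m d2 w" "G = (\<lambda>z. \<Sum>w\<in>M2. c2 w * block_monomial m w z)"
    unfolding hom_poly_iff by blast
  let ?g = "\<lambda>(u, v). add_exponents u v"
  define M where "M = ?g ` (M1 \<times> M2)"
  define c where "c w = (\<Sum>(u, v)\<in>{x \<in> M1 \<times> M2. ?g x = w}. c1 u * c2 v)" for w
  have "finite M" unfolding M_def using M1 M2 by auto
  moreover have "\<forall>w\<in>M. exponent_of_degree m (d1 + d2) w"
    unfolding M_def using M1 M2 by (auto intro: exponent_of_degree_add_exponents)
  moreover have "F z * G z = (\<Sum>w\<in>M. c w * block_monomial m w z)" for z
  proof -
    have "F z * G z = (\<Sum>(u, v)\<in>M1 \<times> M2. c1 u * c2 v * block_monomial m (?g (u, v)) z)"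
      unfolding M1(3) M2(3) sum_product sum.cartesian_product
      by (rule sum.cong) (auto simp: block_monomial_add_exponents mult_ac)
    also have "\<dots> = (\<Sum>w\<in>M. \<Sum>(u, v)\<in>{x \<in> M1 \<times> M2. ?g x = w}. c1 u * c2 v * block_monomial m (?g (u, v)) z)"
      by (rule sum.group[symmetric]) (use M1 M2 \<open>finite M\<close> in \<open>auto simp: M_def\<close>)
    also have "\<dots> = (\<Sum>w\<in>M. c w * block_monomial m w z)"
      unfolding c_def sum_distrib_right by (intro sum.cong refl) auto
    finally show ?thesis .
  qed
  ultimately show ?thesis unfolding hom_poly_iff by blast
qed

lemma hom_poly_one: "hom_poly m 0 (\<lambda>z::'n::finite conf. 1)"
proof -
  have "exponent_of_degree m 0 ((\<lambda>_ _. 0, \<lambda>_ _. 0) :: (nat \<Rightarrow> 'n \<Rightarrow> nat) \<times> _)"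
    by (simp add: exponent_of_degree_def)
  moreover have "block_monomial m (\<lambda>_ _. 0, \<lambda>_ _. 0) = (\<lambda>z::'n conf. 1)"
    by (simp add: block_monomial_def fun_eq_iff)
  ultimately show ?thesis using hom_poly_monomial by metis
qed

lemma hom_poly_prod:
  assumes "finite A" "\<And>a. a \<in> A \<Longrightarrow> hom_poly m (d a) (F a :: 'n::finite conf \<Rightarrow> real)"
  shows "hom_poly m (\<Sum>a\<in>A. d a) (\<lambda>z. \<Prod>a\<in>A. F a z)"
  using assms by (induction A rule: finite_induct) (auto intro: hom_poly_mult hom_poly_one)

definition unit_exponent :: "nat \<Rightarrow> 'n \<Rightarrow> nat \<Rightarrow> 'n \<Rightarrow> nat" where
  "unit_exponent i j = (\<lambda>k l. if k = i then (if l = j then 1 else 0) else 0)"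

lemma sum_unit_exponent:
  assumes "i < m"
  shows "(\<Sum>k<m. \<Sum>l\<in>(UNIV :: 'n::finite set). unit_exponent i j k l) = 1"
proof -
  have "(\<Sum>k<m. \<Sum>l\<in>(UNIV :: 'n set). unit_exponent i j k l) = (\<Sum>k<m. if k = i then 1 else 0)"
    by (rule sum.cong) (simp_all add: unit_exponent_def)
  with assms show ?thesis by simp
qed

lemma prod_power_unit_exponent:
  assumes "i < m"
  shows "(\<Prod>k<m. \<Prod>l\<in>(UNIV :: 'n::finite set). f k l ^ unit_exponent i j k l) = (f i j :: real)"
proof -
  have "(\<Prod>k<m. \<Prod>l\<in>(UNIV :: 'n set). f k l ^ unit_exponent i j k l) = (\<Prod>k<m. if k = i then f i j else 1)"
    by (rule prod.cong) (simp_all add: unit_exponent_def if_distrib[of "power _"] prod.delta cong: if_cong)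
  with assms show ?thesis by simp
qed

lemma hom_poly_fst_coord:
  assumes "i < m"
  shows "hom_poly m 1 (\<lambda>z::'n::finite conf. fst (z i) $ j)"
proof -
  have "exponent_of_degree m 1 ((unit_exponent i j, \<lambda>_ _. 0) :: _ \<times> (nat \<Rightarrow> 'n \<Rightarrow> nat))"
    using assms by (simp add: exponent_of_degree_def sum_unit_exponent) (simp add: unit_exponent_def)
  moreover have "block_monomial m (unit_exponent i j, \<lambda>_ _. 0) = (\<lambda>z::'n conf. fst (z i) $ j)"
    using assms by (simp add: block_monomial_def fun_eq_iff prod_power_unit_exponent)
  ultimately show ?thesis using hom_poly_monomial by metis
qed

lemma hom_poly_snd_coord:
  assumes "i < m"
  shows "hom_poly m 1 (\<lambda>z::'n::finite conf. snd (z i) $ j)"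
proof -
  have "exponent_of_degree m 1 ((\<lambda>_ _. 0, unit_exponent i j) :: _ \<times> (nat \<Rightarrow> 'n \<Rightarrow> nat))"
    using assms by (simp add: exponent_of_degree_def sum_unit_exponent) (simp add: unit_exponent_def)
  moreover have "block_monomial m (\<lambda>_ _. 0, unit_exponent i j) = (\<lambda>z::'n conf. snd (z i) $ j)"
    using assms by (simp add: block_monomial_def fun_eq_iff prod_power_unit_exponent)
  ultimately show ?thesis using hom_poly_monomial by metis
qed

definition hom_pt_poly :: "nat \<Rightarrow> ('n::finite pt \<Rightarrow> real) \<Rightarrow> bool" where
  "hom_pt_poly d h \<longleftrightarrow> (\<forall>m i. i < m \<longrightarrow> hom_poly m d (\<lambda>z. h (z i)))"

lemma hom_pt_poly_const: "hom_pt_poly 0 (\<lambda>p::'n::finite pt. c)"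
  unfolding hom_pt_poly_def using hom_poly_cmult[OF hom_poly_one, of _ c] by auto

lemma hom_pt_poly_fst_coord: "hom_pt_poly 1 (\<lambda>p::'n::finite pt. fst p $ j)"
  unfolding hom_pt_poly_def using hom_poly_fst_coord by blast

lemma hom_pt_poly_snd_coord: "hom_pt_poly 1 (\<lambda>p::'n::finite pt. snd p $ j)"
  unfolding hom_pt_poly_def using hom_poly_snd_coord by blast

lemma hom_pt_poly_cmult: "hom_pt_poly d h \<Longrightarrow> hom_pt_poly d (\<lambda>p. a * h p)"
  unfolding hom_pt_poly_def by (simp add: hom_poly_cmult)

lemma hom_pt_poly_add: "hom_pt_poly d g \<Longrightarrow> hom_pt_poly d h \<Longrightarrow> hom_pt_poly d (\<lambda>p. g p + h p)"
  unfolding hom_pt_poly_def by (simp add: hom_poly_add)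

lemma hom_pt_poly_mult:
  "hom_pt_poly d1 g \<Longrightarrow> hom_pt_poly d2 h \<Longrightarrow> hom_pt_poly (d1 + d2) (\<lambda>p. g p * h p)"
  unfolding hom_pt_poly_def by (simp add: hom_poly_mult)

lemma hom_pt_poly_prod:
  assumes "finite A" "\<And>a. a \<in> A \<Longrightarrow> hom_pt_poly (d a) (h a :: 'n::finite pt \<Rightarrow> real)"
  shows "hom_pt_poly (\<Sum>a\<in>A. d a) (\<lambda>p. \<Prod>a\<in>A. h a p)"
  using assms unfolding hom_pt_poly_def by (simp add: hom_poly_prod)

inductive pt_poly :: "('n::finite pt \<Rightarrow> real) \<Rightarrow> bool" where
  hom: "hom_pt_poly d h \<Longrightarrow> pt_poly h"
| add: "pt_poly g \<Longrightarrow> pt_poly h \<Longrightarrow> pt_poly (\<lambda>p. g p + h p)"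

lemma pt_poly_const: "pt_poly (\<lambda>p. c)"
  by (rule pt_poly.hom[OF hom_pt_poly_const])

lemma pt_poly_mult:
  assumes "pt_poly g" "pt_poly h"
  shows "pt_poly (\<lambda>p. g p * h p)"
  using assms
proof (induction g)
  case (hom d g)
  from \<open>pt_poly h\<close> show ?case
  proof (induction h)
    case (hom e h)
    then show ?case using hom_pt_poly_mult[OF \<open>hom_pt_poly d g\<close>] by (blast intro: pt_poly.hom)
  next
    case (add h1 h2)
    then show ?case by (simp add: distrib_left pt_poly.add)
  qed
next
  case (add g1 g2)
  then show ?case by (simp add: distrib_right pt_poly.add)
qed

lemma pt_poly_prod:
  assumes "finite A" "\<And>a. a \<in> A \<Longrightarrow> pt_poly (h a)"
  shows "pt_poly (\<lambda>p. \<Prod>a\<in>A. h a p)"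
  using assms
proof (induction A rule: finite_induct)
  case empty
  then show ?case using pt_poly_const by simp
next
  case (insert a A)
  then show ?case using pt_poly_mult[of "h a"] by simp
qed

lemma pt_poly_separates_points:
  assumes "a \<noteq> b"
  shows "\<exists>l. pt_poly l \<and> l a \<noteq> (l b :: real)"
proof (cases "fst a = fst b")
  case False
  then obtain j where "fst a $ j \<noteq> fst b $ j" by (auto simp: vec_eq_iff)
  then show ?thesis using pt_poly.hom[OF hom_pt_poly_fst_coord] by blast
next
  case True
  with assms obtain j where "snd a $ j \<noteq> snd b $ j" by (auto simp: vec_eq_iff prod_eq_iff)
  then show ?thesis using pt_poly.hom[OF hom_pt_poly_snd_coord] by blast
qed

lemma pt_poly_vanishing_off_point:
  assumes "finite B" "a \<notin> B"
  shows "\<exists>Q. pt_poly Q \<and> Q a \<noteq> 0 \<and> (\<forall>b\<in>B. Q b = 0)"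
proof -
  have "\<forall>b\<in>B. \<exists>l. pt_poly l \<and> l a \<noteq> l b"
  proof
    fix b assume "b \<in> B"
    with assms(2) have "a \<noteq> b" by blast
    then show "\<exists>l. pt_poly l \<and> l a \<noteq> l b" by (rule pt_poly_separates_points)
  qed
  then have "\<exists>l. \<forall>b\<in>B. pt_poly (l b) \<and> l b a \<noteq> l b b"
    by (rule bchoice)
  then obtain l where l: "\<forall>b\<in>B. pt_poly (l b) \<and> l b a \<noteq> l b b" ..
  define Q where "Q p = (\<Prod>b\<in>B. l b p + - l b b)" for p
  have "pt_poly (\<lambda>p. l b p + - l b b)" if "b \<in> B" for b
    using l that pt_poly.add[OF _ pt_poly_const] by blast
  then have "pt_poly Q"
    unfolding Q_def using assms(1) by (rule pt_poly_prod[rotated])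
  moreover have "Q a \<noteq> 0" using assms(1) l by (simp add: Q_def prod_zero_iff)
  moreover have "\<forall>b\<in>B. Q b = 0" using assms(1) by (auto simp: Q_def prod_zero_iff)
  ultimately show ?thesis by blast
qed

definition block_sum :: "('n::finite pt \<Rightarrow> real) \<Rightarrow> nat \<Rightarrow> 'n conf \<Rightarrow> real" where
  "block_sum Q m z = (\<Sum>i<m. Q (z i))"

lemma block_sum_add: "block_sum (\<lambda>p. g p + h p) = (\<lambda>m z. block_sum g m z + block_sum h m z)"
  by (simp add: fun_eq_iff block_sum_def sum.distrib)

lemma hom_family_block_sum:
  fixes h :: "'n::finite pt \<Rightarrow> real"
  assumes "hom_pt_poly d h" "h (0, 0) = 0"
  shows "hom_family d (block_sum h)"
  unfolding hom_family_def
proof (intro conjI allI impI)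
  fix m :: nat
  show "hom_poly m d (block_sum h m)"
    using assms(1) unfolding block_sum_def hom_pt_poly_def by (intro hom_poly_sum) auto
  show "sym_m m (block_sum h m)"
    unfolding sym_m_def block_sum_def
  proof (intro allI impI)
    fix \<sigma> and z :: "'n conf"
    assume "\<sigma> permutes {..<m}"
    then show "(\<Sum>i<m. h ((z \<circ> \<sigma>) i)) = (\<Sum>i<m. h (z i))"
      using sum.reindex_bij_betw[OF permutes_imp_bij, of \<sigma> "{..<m}" "\<lambda>i. h (z i)"] by simp
  qed
  fix z :: "'n conf"
  show "block_sum h m z = block_sum h (Suc m) (z(m := (0, 0)))"
    using assms(2) by (simp add: block_sum_def)
qed

lemma block_sum_in_A_inf_fin:
  assumes "hom_pt_poly d h" "h (0, 0) = 0"
  shows "block_sum h \<in> A_inf_fin"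
  unfolding A_inf_fin_def
  using hom_family_block_sum[OF assms]
  by (intro CollectI exI[of _ 1] exI[of _ "\<lambda>_. d"] exI[of _ "\<lambda>_. block_sum h"]) simp

lemma A_inf_fin_add:
  fixes f g :: "nat \<Rightarrow> 'n::finite conf \<Rightarrow> real"
  assumes "f \<in> A_inf_fin" "g \<in> A_inf_fin"
  shows "(\<lambda>m z. f m z + g m z) \<in> A_inf_fin"
proof -
  from assms(1) obtain k1 :: nat and ds1 gs1 where
    f: "\<forall>l<k1. hom_family (ds1 l) (gs1 l)" "\<forall>m\<ge>1. \<forall>z. f m z = (\<Sum>l<k1. gs1 l m z)"
    unfolding A_inf_fin_def by blast
  from assms(2) obtain k2 :: nat and ds2 gs2 where
    g: "\<forall>l<k2. hom_family (ds2 l) (gs2 l)" "\<forall>m\<ge>1. \<forall>z. g m z = (\<Sum>l<k2. gs2 l m z)"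
    unfolding A_inf_fin_def by blast
  define ds where "ds l = (if l < k1 then ds1 l else ds2 (l - k1))" for l
  define gs where "gs l = (if l < k1 then gs1 l else gs2 (l - k1))" for l
  have split: "(\<Sum>l<k1 + k2. F l) = (\<Sum>l<k1. F l) + (\<Sum>l<k2. F (k1 + l))" for F :: "nat \<Rightarrow> real"
    by (induction k2) simp_all
  have "\<forall>l<k1 + k2. hom_family (ds l) (gs l)"
    using f(1) g(1) by (simp add: ds_def gs_def)
  moreover have "f m z + g m z = (\<Sum>l<k1 + k2. gs l m z)" if "m \<ge> 1" for m z
    using f(2) g(2) that by (simp add: split gs_def)
  ultimately show ?thesis
    unfolding A_inf_fin_def by blast
qed

lemma phi_add: "phi X (\<lambda>m z. f m z + g m z) = phi X f + phi X g"
  by (simp add: phi_def)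

lemma phi_block_sum:
  assumes "Q (0, 0) = 0"
  shows "phi X (block_sum Q) = (\<Sum>p\<in>#X. Q p)"
proof -
  define xs where "xs = (SOME xs. mset xs = X)"
  have xs: "mset xs = X" unfolding xs_def by (rule someI_ex) (rule ex_mset)
  have len: "length xs \<le> max 1 (size X)" using xs by (metis max.cobounded2 size_mset)
  have "phi X (block_sum Q) = (\<Sum>i<max 1 (size X). Q (conf_of_list xs i))"
    unfolding phi_def block_sum_def xs_def ..
  also have "\<dots> = (\<Sum>i<length xs. Q (conf_of_list xs i))"
    by (rule sum.mono_neutral_right) (use len assms in \<open>auto simp: conf_of_list_def\<close>)
  also have "\<dots> = (\<Sum>i<length xs. Q (xs ! i))"
    by (rule sum.cong) (auto simp: conf_of_list_def)
  also have "\<dots> = sum_list (map Q xs)"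
    by (simp add: sum_list_sum_nth atLeast0LessThan)
  also have "\<dots> = (\<Sum>p\<in>#X. Q p)"
    by (simp flip: xs sum_mset_sum_list)
  finally show ?thesis .
qed

lemma phi_block_sum_concentrated:
  assumes "Q (0, 0) = 0" "\<forall>p\<in>#X. p \<noteq> a \<longrightarrow> Q p = 0"
  shows "phi X (block_sum Q) = of_nat (count X a) * Q a"
proof -
  have "image_mset Q X = image_mset (\<lambda>p. if p = a then Q a else 0) X"
    using assms(2) by (intro image_mset_cong) auto
  then show ?thesis
    by (simp add: phi_block_sum[of Q, OF assms(1)] sum_mset_delta)
qed

lemma A_fin_Sp_add:
  assumes "f \<in> A_fin_Sp" "g \<in> A_fin_Sp"
  shows "(\<lambda>m z. f m z + g m z) \<in> A_fin_Sp"
  using assms unfolding A_fin_Sp_def by (simp add: A_inf_fin_add phi_add)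

lemma block_sum_in_A_fin_Sp:
  assumes "hom_pt_poly d h" "\<And>p. degenerate p \<Longrightarrow> h p = 0"
  shows "block_sum h \<in> A_fin_Sp"
proof -
  have h0: "h (0, 0) = 0" by (rule assms(2)) (simp add: degenerate_def)
  have "phi (add_mset p X) (block_sum h) = phi X (block_sum h)" if "degenerate p" for p X
    using assms(2)[OF that] by (simp add: phi_block_sum[of h, OF h0])
  with block_sum_in_A_inf_fin[OF assms(1) h0] show ?thesis
    unfolding A_fin_Sp_def by blast
qed

definition degeneracy_poly :: "'n::finite pt \<Rightarrow> real" where
  "degeneracy_poly p = (\<Prod>j\<in>UNIV. fst p $ j - snd p $ j)"

lemma degeneracy_poly_eq_0_iff: "degeneracy_poly p = 0 \<longleftrightarrow> degenerate p"
  by (auto simp: degeneracy_poly_def degenerate_def prod_zero_iff)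

lemma hom_pt_poly_degeneracy_poly: "hom_pt_poly CARD('n) (degeneracy_poly :: 'n::finite pt \<Rightarrow> real)"
proof -
  have "hom_pt_poly 1 (\<lambda>p::'n pt. fst p $ j + (-1) * snd p $ j)" for j
    by (intro hom_pt_poly_add hom_pt_poly_fst_coord hom_pt_poly_cmult hom_pt_poly_snd_coord)
  then have "hom_pt_poly (\<Sum>j\<in>(UNIV :: 'n set). 1) (\<lambda>p::'n pt. \<Prod>j\<in>UNIV. fst p $ j - snd p $ j)"
    by (intro hom_pt_poly_prod) auto
  then show ?thesis by (simp add: degeneracy_poly_def[abs_def])
qed

lemma block_sum_degeneracy_poly_mult_in_A_fin_Sp:
  assumes "pt_poly Q"
  shows "block_sum (\<lambda>p. degeneracy_poly p * Q p) \<in> A_fin_Sp"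
  using assms
proof (induction Q)
  case (hom d h)
  show ?case
    by (rule block_sum_in_A_fin_Sp[OF hom_pt_poly_mult[OF hom_pt_poly_degeneracy_poly hom]])
      (simp add: degeneracy_poly_eq_0_iff)
next
  case (add g h)
  then show ?case by (simp add: distrib_left block_sum_add A_fin_Sp_add)
qed

lemma sp_equiv_add_degenerate:
  assumes "\<forall>p\<in>#N. degenerate p"
  shows "sp_equiv (X + N) X"
  using assms
proof (induction N)
  case empty
  then show ?case by (simp add: sp_equiv_def)
next
  case (add p N)
  then have "sp_equiv (X + N) X" by simp
  moreover have "sp_step (X + N) (add_mset p (X + N))"
    using add.prems unfolding sp_step_def by (intro exI[of _ p]) simp
  then have "equivclp sp_step (add_mset p (X + N)) (X + N)"
    by (rule equivclp_sym[OF r_into_equivclp])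
  ultimately show ?case
    unfolding sp_equiv_def by (simp add: equivclp_trans)
qed

lemma sp_equiv_filter_nondegenerate: "sp_equiv X (filter_mset (\<lambda>p. \<not> degenerate p) X)"
proof -
  have "X = filter_mset (\<lambda>p. \<not> degenerate p) X + filter_mset degenerate X"
    by (subst add.commute) (rule multiset_partition)
  moreover have "sp_equiv (filter_mset (\<lambda>p. \<not> degenerate p) X + filter_mset degenerate X)
      (filter_mset (\<lambda>p. \<not> degenerate p) X)"
    by (rule sp_equiv_add_degenerate) simp
  ultimately show ?thesis by simp
qed

lemma ex_nondegenerate_count_neq:
  assumes "\<not> sp_equiv X Y"
  shows "\<exists>a. \<not> degenerate a \<and> count X a \<noteq> count Y a"
proof (rule ccontr)
  assume "\<nexists>a. \<not> degenerate a \<and> count X a \<noteq> count Y a"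
  then have "filter_mset (\<lambda>p. \<not> degenerate p) X = filter_mset (\<lambda>p. \<not> degenerate p) Y"
    by (intro multiset_eqI) (auto simp: count_filter_mset)
  then have "sp_equiv X Y"
    using sp_equiv_filter_nondegenerate[of X] sp_equiv_filter_nondegenerate[of Y]
    unfolding sp_equiv_def by (metis equivclp_sym equivclp_trans)
  with assms show False by contradiction
qed

theorem lemma4p6:
  fixes X Y :: "'n::finite pt multiset"
  assumes "\<not> sp_equiv X Y"
  shows "\<exists>f \<in> A_fin_Sp. phi X f \<noteq> phi Y f"
proof -
  obtain a where a: "\<not> degenerate a" "count X a \<noteq> count Y a"
    using ex_nondegenerate_count_neq[OF assms] by blast
  obtain Q where Q: "pt_poly Q" "Q a \<noteq> 0" "\<forall>b\<in>(set_mset X \<union> set_mset Y) - {a}. Q b = 0"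
    using pt_poly_vanishing_off_point[of "(set_mset X \<union> set_mset Y) - {a}" a] by auto
  define F where "F p = degeneracy_poly p * Q p" for p
  have F0: "F (0, 0) = 0"
    by (simp add: F_def degeneracy_poly_eq_0_iff degenerate_def)
  have phi_F: "phi Z (block_sum F) = of_nat (count Z a) * F a" if "Z = X \<or> Z = Y" for Z
    using Q(3) that by (intro phi_block_sum_concentrated F0) (auto simp: F_def)
  have "F a \<noteq> 0"
    using a(1) Q(2) by (simp add: F_def degeneracy_poly_eq_0_iff)
  with a(2) have "phi X (block_sum F) \<noteq> phi Y (block_sum F)"
    by (simp add: phi_F)
  moreover have "block_sum F \<in> A_fin_Sp"
    unfolding F_def by (rule block_sum_degeneracy_poly_mult_in_A_fin_Sp[OF Q(1)])
  ultimately show ?thesis by blast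
qed

end
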